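(* Let $(\Lambda,d)$ be a finitely aligned $k$-graph. Then $S_\Lambda$, with the multiplication $FG:=\bigcup_{(\lambda,\mu)\in F,(\xi,\eta)\in G}\{(\lambda\alpha,\eta\beta):(\alpha,\beta)\in\Lambda^{\min}(\mu,\xi)\}$, is an inverse semigroup, with involution given by $F^*:=\{(\mu,\lambda):(\lambda,\mu)\in F\}$; that is, for each $F\in S_\Lambda$, $F^*$ is the unique $G\in S_\Lambda$ with $FGF=F$ and $GFG=G$.
   Context: A $k$-graph $(\Lambda,d)$ is a countable small category $\Lambda$ (objects identified with identity morphisms) with a functor $d:\Lambda\to\mathbb N^k$ satisfying unique factorization: whenever $d(\lambda)=m+n$ there are unique $\mu,\nu$ with $d(\mu)=m$, $d(\nu)=n$, $\lambda=\mu\nu$. $r,s$ are range/source. $\Lambda^{\min}(\lambda,\mu)=\{(\alpha,\beta):\lambda\alpha=\mu\beta,\ d(\lambda\alpha)=d(\lambda)\vee d(\mu)\}$ ($\vee$ coordinatewise max); finitely aligned means all these sets are finite. $\Lambda*_s\Lambda=\{(\lambda,\mu):s(\lambda)=s(\mu)\}$. $S_\Lambda$ is the collection of finite $F\subseteq\Lambda*_s\Lambda$ such that distinct $(\lambda,\mu),(\nu,\omega)\in F$ satisfy $\Lambda^{\min}(\lambda,\nu)=\emptyset$ and $\Lambda^{\min}(\mu,\omega)=\emptyset$; the given product is an associative operation on $S_\Lambda$. *)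

theory Defs
  imports Main "HOL-Library.Countable_Set"
begin

text \<open>A k-graph is given by: a set of morphisms Mor, a set of objects Obj
 (identified with identity morphisms), range r, source s, composition cmp
 (cmp l m = l m, defined when s l = r m), and degree d into N^k, where N^k
 is represented by functions nat => nat vanishing from k on.\<close>

definition k_graph ::
  "nat \<Rightarrow> 'a set \<Rightarrow> 'a set \<Rightarrow> ('a \<Rightarrow> 'a) \<Rightarrow> ('a \<Rightarrow> 'a) \<Rightarrow> ('a \<Rightarrow> 'a \<Rightarrow> 'a)
    \<Rightarrow> ('a \<Rightarrow> nat \<Rightarrow> nat) \<Rightarrow> bool" where
  "k_graph k Mor Obj r s cmp d \<longleftrightarrow>
     countable Mor \<and> Obj \<subseteq> Mor \<and>
     (\<forall>l\<in>Mor. r l \<in> Obj \<and> s l \<in> Obj) \<and>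
     (\<forall>v\<in>Obj. r v = v \<and> s v = v) \<and>
     (\<forall>l\<in>Mor. \<forall>m\<in>Mor. s l = r m \<longrightarrow>
        cmp l m \<in> Mor \<and> r (cmp l m) = r l \<and> s (cmp l m) = s m) \<and>
     (\<forall>l\<in>Mor. \<forall>m\<in>Mor. \<forall>n\<in>Mor. s l = r m \<and> s m = r n \<longrightarrow>
        cmp (cmp l m) n = cmp l (cmp m n)) \<and>
     (\<forall>l\<in>Mor. cmp (r l) l = l \<and> cmp l (s l) = l) \<and>
     (\<forall>l\<in>Mor. \<forall>i\<ge>k. d l i = 0) \<and>
     (\<forall>v\<in>Obj. d v = (\<lambda>i. 0)) \<and>
     (\<forall>l\<in>Mor. \<forall>m\<in>Mor. s l = r m \<longrightarrow> d (cmp l m) = (\<lambda>i. d l i + d m i)) \<and>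
     (\<forall>l\<in>Mor. \<forall>p q. d l = (\<lambda>i. p i + q i) \<longrightarrow>
        (\<exists>!(m, n). m \<in> Mor \<and> n \<in> Mor \<and> s m = r n \<and> d m = p \<and> d n = q
                  \<and> l = cmp m n))"

definition Lmin ::
  "'a set \<Rightarrow> ('a \<Rightarrow> 'a) \<Rightarrow> ('a \<Rightarrow> 'a) \<Rightarrow> ('a \<Rightarrow> 'a \<Rightarrow> 'a) \<Rightarrow> ('a \<Rightarrow> nat \<Rightarrow> nat)
    \<Rightarrow> 'a \<Rightarrow> 'a \<Rightarrow> ('a \<times> 'a) set" where
  "Lmin Mor r s cmp d l m =
     {(a, b). a \<in> Mor \<and> b \<in> Mor \<and> s l = r a \<and> s m = r b \<and>
              cmp l a = cmp m b \<and>
              d (cmp l a) = (\<lambda>i. max (d l i) (d m i))}"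

definition finitely_aligned ::
  "'a set \<Rightarrow> ('a \<Rightarrow> 'a) \<Rightarrow> ('a \<Rightarrow> 'a) \<Rightarrow> ('a \<Rightarrow> 'a \<Rightarrow> 'a) \<Rightarrow> ('a \<Rightarrow> nat \<Rightarrow> nat) \<Rightarrow> bool" where
  "finitely_aligned Mor r s cmp d \<longleftrightarrow>
     (\<forall>l\<in>Mor. \<forall>m\<in>Mor. finite (Lmin Mor r s cmp d l m))"

definition fib_s :: "'a set \<Rightarrow> ('a \<Rightarrow> 'a) \<Rightarrow> ('a \<times> 'a) set" where
  "fib_s Mor s = {(l, m). l \<in> Mor \<and> m \<in> Mor \<and> s l = s m}"

definition S_Lambda ::
  "'a set \<Rightarrow> ('a \<Rightarrow> 'a) \<Rightarrow> ('a \<Rightarrow> 'a) \<Rightarrow> ('a \<Rightarrow> 'a \<Rightarrow> 'a) \<Rightarrow> ('a \<Rightarrow> nat \<Rightarrow> nat)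
    \<Rightarrow> ('a \<times> 'a) set set" where
  "S_Lambda Mor r s cmp d =
     {F. finite F \<and> F \<subseteq> fib_s Mor s \<and>
         (\<forall>(l, m)\<in>F. \<forall>(n, w)\<in>F. (l, m) \<noteq> (n, w) \<longrightarrow>
             Lmin Mor r s cmp d l n = {} \<and> Lmin Mor r s cmp d m w = {})}"

definition S_mult ::
  "'a set \<Rightarrow> ('a \<Rightarrow> 'a) \<Rightarrow> ('a \<Rightarrow> 'a) \<Rightarrow> ('a \<Rightarrow> 'a \<Rightarrow> 'a) \<Rightarrow> ('a \<Rightarrow> nat \<Rightarrow> nat)
    \<Rightarrow> ('a \<times> 'a) set \<Rightarrow> ('a \<times> 'a) set \<Rightarrow> ('a \<times> 'a) set" where
  "S_mult Mor r s cmp d F G =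
     (\<Union>(l, m)\<in>F. \<Union>(x, e)\<in>G.
        {(cmp l a, cmp e b) | a b. (a, b) \<in> Lmin Mor r s cmp d m x})"

definition S_star :: "('a \<times> 'a) set \<Rightarrow> ('a \<times> 'a) set" where
  "S_star F = {(m, l). (l, m) \<in> F}"

end

theory Submission
  imports Defs
begin

(*
  Unique factorisation lets every common extension l a = m b factor through an element of
  Lambda^min(l, m).  Hence two pairs of some F in S_Lambda with a common extension in one
  coordinate coincide, with equal extensions; this is what keeps the pairs of a product
  disjoint.  Both bracketings of a triple product equal the set of all (l a, theta c) built
  from a single middle morphism b of degree (d m - d xi) join (d zeta - d eta): for (F G) H
  this is checked directly, and F (G H) reduces to it because F |-> F* reverses products.
  Finally F F* F = F because inside F only trivial extensions occur.  If F G F = F and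
  G F G = G, then every (l, m) in F is (eta beta, xi beta) for some (xi, eta) in G, and
  conversely; composing the two factorisations extends l inside F by beta' beta, which
  forces beta to be an identity, so G = F*.
*)

lemma mem_S_star [simp]: "(x, y) \<in> S_star F \<longleftrightarrow> (y, x) \<in> F"
  by (simp add: S_star_def)

lemma S_star_S_star [simp]: "S_star (S_star F) = F"
  by (auto simp: S_star_def)

lemma Lmin_swap: "(a, b) \<in> Lmin Mor r s cmp d l m \<longleftrightarrow> (b, a) \<in> Lmin Mor r s cmp d m l"
  by (auto simp: Lmin_def max.commute)

lemma mem_S_mult: "(x, y) \<in> S_mult Mor r s cmp d F G \<longleftrightarrow>
    (\<exists>l m \<xi> \<eta> a b. (l, m) \<in> F \<and> (\<xi>, \<eta>) \<in> G \<and> (a, b) \<in> Lmin Mor r s cmp d m \<xi>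
       \<and> x = cmp l a \<and> y = cmp \<eta> b)"
  unfolding S_mult_def by blast

lemma S_mult_eq_UN_image:
  "S_mult Mor r s cmp d F G =
    (\<Union>(l, m)\<in>F. \<Union>(\<xi>, \<eta>)\<in>G. (\<lambda>(a, b). (cmp l a, cmp \<eta> b)) ` Lmin Mor r s cmp d m \<xi>)"
  unfolding S_mult_def by fast

lemma S_star_S_mult:
  "S_star (S_mult Mor r s cmp d F G) = S_mult Mor r s cmp d (S_star G) (S_star F)"
proof (intro set_eqI iffI)
  fix z assume "z \<in> S_star (S_mult Mor r s cmp d F G)"
  then show "z \<in> S_mult Mor r s cmp d (S_star G) (S_star F)"
    by (cases z) (fastforce simp: mem_S_mult Lmin_swap)
next
  fix z assume "z \<in> S_mult Mor r s cmp d (S_star G) (S_star F)"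
  then show "z \<in> S_star (S_mult Mor r s cmp d F G)"
    by (cases z) (fastforce simp: mem_S_mult Lmin_swap)
qed

lemma S_Lambda_disjoint:
  assumes "F \<in> S_Lambda Mor r s cmp d" "(l, m) \<in> F" "(n, w) \<in> F" "(l, m) \<noteq> (n, w)"
  shows "Lmin Mor r s cmp d l n = {}" "Lmin Mor r s cmp d m w = {}"
  using assms unfolding S_Lambda_def mem_Collect_eq by fast+

lemma fib_sD:
  assumes "F \<subseteq> fib_s Mor s" "(l, m) \<in> F"
  shows "l \<in> Mor" "m \<in> Mor" "s l = s m"
  using assms unfolding fib_s_def by auto

lemma S_Lambda_subset_fib_s: "F \<in> S_Lambda Mor r s cmp d \<Longrightarrow> F \<subseteq> fib_s Mor s"
  unfolding S_Lambda_def by simp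

lemma S_Lambda_memD:
  assumes "F \<in> S_Lambda Mor r s cmp d" "(l, m) \<in> F"
  shows "l \<in> Mor" "m \<in> Mor" "s l = s m"
  using fib_sD[OF S_Lambda_subset_fib_s[OF assms(1)] assms(2)] by simp_all

lemma S_LambdaI:
  assumes "finite F" "F \<subseteq> fib_s Mor s"
    and "\<And>l m n w. (l, m) \<in> F \<Longrightarrow> (n, w) \<in> F \<Longrightarrow> (l, m) \<noteq> (n, w) \<Longrightarrow>
      Lmin Mor r s cmp d l n = {} \<and> Lmin Mor r s cmp d m w = {}"
  shows "F \<in> S_Lambda Mor r s cmp d"
  using assms unfolding S_Lambda_def by blast

lemma S_star_in_S_Lambda:
  assumes "F \<in> S_Lambda Mor r s cmp d"
  shows "S_star F \<in> S_Lambda Mor r s cmp d"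
proof -
  have "S_star F = prod.swap ` F" by (force simp: S_star_def)
  then have "finite (S_star F)" "S_star F \<subseteq> fib_s Mor s"
    using assms unfolding S_Lambda_def fib_s_def by auto
  then show ?thesis
  proof (rule S_LambdaI)
    fix l m n w
    assume "(l, m) \<in> S_star F" "(n, w) \<in> S_star F" "(l, m) \<noteq> (n, w)"
    then show "Lmin Mor r s cmp d l n = {} \<and> Lmin Mor r s cmp d m w = {}"
      using S_Lambda_disjoint[OF assms, of m l w n] by auto
  qed
qed

locale kgraph =
  fixes k :: nat and Mor Obj :: "'a set" and r s :: "'a \<Rightarrow> 'a"
    and cmp :: "'a \<Rightarrow> 'a \<Rightarrow> 'a" (infixr "\<cdot>" 70) and d :: "'a \<Rightarrow> nat \<Rightarrow> nat"
  assumes k_graph: "k_graph k Mor Obj r s cmp d"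
begin

lemma
  assumes "l \<in> Mor"
  shows r_in_Mor [simp]: "r l \<in> Mor"
    and s_in_Mor [simp]: "s l \<in> Mor"
    and s_r [simp]: "s (r l) = r l"
    and r_s [simp]: "r (s l) = s l"
    and d_r [simp]: "d (r l) i = 0"
    and d_s [simp]: "d (s l) i = 0"
proof -
  have "Obj \<subseteq> Mor" "\<forall>l\<in>Mor. r l \<in> Obj \<and> s l \<in> Obj" "\<forall>v\<in>Obj. r v = v \<and> s v = v"
    "\<forall>v\<in>Obj. d v = (\<lambda>i. 0)"
    using k_graph unfolding k_graph_def by simp_all
  then show "r l \<in> Mor" "s l \<in> Mor" "s (r l) = r l" "r (s l) = s l"
    "d (r l) i = 0" "d (s l) i = 0"
    using assms by auto
qed

lemma
  assumes "l \<in> Mor" "m \<in> Mor" "s l = r m"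
  shows comp_in_Mor [simp]: "l \<cdot> m \<in> Mor"
    and r_comp [simp]: "r (l \<cdot> m) = r l"
    and s_comp [simp]: "s (l \<cdot> m) = s m"
    and d_comp [simp]: "d (l \<cdot> m) i = d l i + d m i"
proof -
  have "\<forall>l\<in>Mor. \<forall>m\<in>Mor. s l = r m \<longrightarrow> l \<cdot> m \<in> Mor \<and> r (l \<cdot> m) = r l \<and> s (l \<cdot> m) = s m"
    "\<forall>l\<in>Mor. \<forall>m\<in>Mor. s l = r m \<longrightarrow> d (l \<cdot> m) = (\<lambda>i. d l i + d m i)"
    using k_graph unfolding k_graph_def by simp_all
  then show "l \<cdot> m \<in> Mor" "r (l \<cdot> m) = r l" "s (l \<cdot> m) = s m" "d (l \<cdot> m) i = d l i + d m i"
    using assms by auto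
qed

lemma
  assumes "l \<in> Mor"
  shows comp_s [simp]: "l \<cdot> s l = l"
    and r_comp_self: "r l \<cdot> l = l"
proof -
  have "\<forall>l\<in>Mor. r l \<cdot> l = l \<and> l \<cdot> s l = l"
    using k_graph unfolding k_graph_def by (elim conjE) assumption
  then show "l \<cdot> s l = l" "r l \<cdot> l = l"
    using assms by auto
qed

lemma comp_assoc:
  assumes "l \<in> Mor" "m \<in> Mor" "n \<in> Mor" "s l = r m" "s m = r n"
  shows "(l \<cdot> m) \<cdot> n = l \<cdot> m \<cdot> n"
proof -
  have "\<forall>l\<in>Mor. \<forall>m\<in>Mor. \<forall>n\<in>Mor. s l = r m \<and> s m = r n \<longrightarrow> (l \<cdot> m) \<cdot> n = l \<cdot> m \<cdot> n"
    using k_graph unfolding k_graph_def by (elim conjE) assumption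
  then show ?thesis
    using assms by blast
qed

lemma unique_factorization:
  assumes "l \<in> Mor" "d l = (\<lambda>i. p i + q i)"
  shows "\<exists>!(m, n). m \<in> Mor \<and> n \<in> Mor \<and> s m = r n \<and> d m = p \<and> d n = q \<and> l = m \<cdot> n"
proof -
  have "\<forall>l\<in>Mor. \<forall>p q. d l = (\<lambda>i. p i + q i) \<longrightarrow>
      (\<exists>!(m, n). m \<in> Mor \<and> n \<in> Mor \<and> s m = r n \<and> d m = p \<and> d n = q \<and> l = m \<cdot> n)"
    using k_graph unfolding k_graph_def by (elim conjE) assumption
  then show ?thesis
    using assms by blast
qed

lemma factorization_exists:
  assumes "l \<in> Mor" "\<And>i. d l i = p i + q i"
  obtains m n where "m \<in> Mor" "n \<in> Mor" "s m = r n" "d m = p" "d n = q" "l = m \<cdot> n"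
proof -
  have "d l = (\<lambda>i. p i + q i)"
    using assms(2) by auto
  then show thesis
    using unique_factorization[OF assms(1)] that by blast
qed

lemma factorization_unique:
  assumes "m \<in> Mor" "n \<in> Mor" "m' \<in> Mor" "n' \<in> Mor" "s m = r n" "s m' = r n'"
    and "m \<cdot> n = m' \<cdot> n'" "d m = d m'"
  shows "m = m'" "n = n'"
proof -
  have "d m i + d n i = d m' i + d n' i" for i
    using assms(1-6) arg_cong[OF assms(7), of "\<lambda>x. d x i"] by simp
  then have "d n = d n'"
    using assms(8) by (simp add: fun_eq_iff)
  have "d (m \<cdot> n) = (\<lambda>i. d m i + d n i)"
    using assms(1,2,5) by auto
  then have uniq: "\<exists>!(x, y). x \<in> Mor \<and> y \<in> Mor \<and> s x = r y \<and> d x = d m \<and> d y = d n \<and> m \<cdot> n = x \<cdot> y"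
    using unique_factorization[of "m \<cdot> n" "d m" "d n"] assms(1,2,5) by simp
  have "(m, n) = (m', n')"
    using the1_equality[OF uniq, of "(m, n)"] the1_equality[OF uniq, of "(m', n')"]
      assms \<open>d n = d n'\<close> by simp
  then show "m = m'" "n = n'"
    by simp_all
qed

lemma cancel_left:
  assumes "l \<in> Mor" "a \<in> Mor" "b \<in> Mor" "s l = r a" "s l = r b" "l \<cdot> a = l \<cdot> b"
  shows "a = b"
  using factorization_unique(2)[of l a l b] assms by simp

lemma degree_zero_imp_eq_r:
  assumes "a \<in> Mor" "\<And>i. d a i = 0"
  shows "a = r a"
proof -
  have "r a \<cdot> a = a \<cdot> s a"
    using assms(1) by (simp add: r_comp_self)
  then show ?thesis
    using factorization_unique(1)[of "r a" a a "s a"] assms by (simp add: fun_eq_iff)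
qed

abbreviation \<Lambda>min :: "'a \<Rightarrow> 'a \<Rightarrow> ('a \<times> 'a) set" where
  "\<Lambda>min \<equiv> Lmin Mor r s cmp d"

lemma Lmin_memD:
  assumes "(a, b) \<in> \<Lambda>min l m"
  shows "a \<in> Mor" "b \<in> Mor" "s l = r a" "s m = r b" "l \<cdot> a = m \<cdot> b"
  using assms unfolding Lmin_def by simp_all

lemma Lmin_source_degree:
  assumes "(a, b) \<in> \<Lambda>min l m" "l \<in> Mor" "m \<in> Mor"
  shows "s a = s b" "d a i = d m i - d l i" "d b i = d l i - d m i"
proof -
  note ab = Lmin_memD[OF assms(1)]
  have "s (l \<cdot> a) = s a" "s (m \<cdot> b) = s b"
    using ab(1-4) assms(2,3) by simp_all
  then show "s a = s b"
    using ab(5) by simp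
  have "d (l \<cdot> a) i = max (d l i) (d m i)"
    using assms(1) unfolding Lmin_def by auto
  moreover have "d (l \<cdot> a) i = d l i + d a i" "d (m \<cdot> b) i = d m i + d b i"
    using ab(1-4) assms(2,3) by simp_all
  ultimately show "d a i = d m i - d l i" "d b i = d l i - d m i"
    using ab(5) by auto
qed

lemma Lmin_factor_common_extension:
  assumes "l \<in> Mor" "m \<in> Mor" "a \<in> Mor" "b \<in> Mor" "s l = r a" "s m = r b" "l \<cdot> a = m \<cdot> b"
  obtains \<alpha> \<beta> e where "(\<alpha>, \<beta>) \<in> \<Lambda>min l m" "e \<in> Mor" "s \<alpha> = r e" "s \<beta> = r e"
    "a = \<alpha> \<cdot> e" "b = \<beta> \<cdot> e"
proof -
  define j where "j i = max (d l i) (d m i)" for i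
  have la_Mor: "l \<cdot> a \<in> Mor"
    using assms(1,3,5) by simp
  have d_la: "d (l \<cdot> a) i = d l i + d a i" and d_mb: "d (m \<cdot> b) i = d m i + d b i" for i
    using assms(1-6) by simp_all
  have "d (l \<cdot> a) i = j i + (d (l \<cdot> a) i - j i)" for i
    using d_la[of i] d_mb[of i] assms(7) by (auto simp: j_def max_def)
  then obtain \<rho> \<tau> where \<rho>\<tau>: "\<rho> \<in> Mor" "\<tau> \<in> Mor" "s \<rho> = r \<tau>" "d \<rho> = j" "l \<cdot> a = \<rho> \<cdot> \<tau>"
    by (rule factorization_exists[OF la_Mor])
  have "d \<rho> i = d l i + (j i - d l i)" "d \<rho> i = d m i + (j i - d m i)" for i
    using \<rho>\<tau>(4) by (auto simp: j_def)
  obtain l' a' where la: "l' \<in> Mor" "a' \<in> Mor" "s l' = r a'" "d l' = d l" "\<rho> = l' \<cdot> a'"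
    by (rule factorization_exists[OF \<rho>\<tau>(1) \<open>\<And>i. d \<rho> i = d l i + (j i - d l i)\<close>])
  obtain m' b' where mb: "m' \<in> Mor" "b' \<in> Mor" "s m' = r b'" "d m' = d m" "\<rho> = m' \<cdot> b'"
    by (rule factorization_exists[OF \<rho>\<tau>(1) \<open>\<And>i. d \<rho> i = d m i + (j i - d m i)\<close>])
  have sa': "s a' = r \<tau>"
    using \<rho>\<tau>(3) la(1-3) by (simp add: la(5))
  have sb': "s b' = r \<tau>"
    using \<rho>\<tau>(3) mb(1-3) by (simp add: mb(5))
  have "l' \<cdot> a' \<cdot> \<tau> = l \<cdot> a"
    using comp_assoc[OF la(1,2) \<rho>\<tau>(2) la(3) sa'] la(5) \<rho>\<tau>(5) by simp
  then have "l' = l" and a: "a' \<cdot> \<tau> = a"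
    using factorization_unique[of l' "a' \<cdot> \<tau>" l a] la(1-4) \<rho>\<tau>(2) sa' assms(1,3,5) by simp_all
  have "m' \<cdot> b' \<cdot> \<tau> = m \<cdot> b"
    using comp_assoc[OF mb(1,2) \<rho>\<tau>(2) mb(3) sb'] mb(5) \<rho>\<tau>(5) assms(7) by simp
  then have "m' = m" and b: "b' \<cdot> \<tau> = b"
    using factorization_unique[of m' "b' \<cdot> \<tau>" m b] mb(1-4) \<rho>\<tau>(2) sb' assms(2,4,6) by simp_all
  have "d (l \<cdot> a') = (\<lambda>i. max (d l i) (d m i))"
    using \<rho>\<tau>(4) la(5) \<open>l' = l\<close> by (simp add: j_def fun_eq_iff)
  then have "(a', b') \<in> \<Lambda>min l m"
    unfolding Lmin_def using la mb \<open>l' = l\<close> \<open>m' = m\<close> by auto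
  then show thesis
    using that[OF _ \<rho>\<tau>(2) sa' sb' a[symmetric] b[symmetric]] by simp
qed

lemma Lmin_eq_of_common_extension:
  assumes "(a1, b1) \<in> \<Lambda>min m \<xi>" "(a2, b2) \<in> \<Lambda>min m \<xi>" "m \<in> Mor" "\<xi> \<in> Mor"
    and "p \<in> Mor" "q \<in> Mor" "s a1 = r p" "s a2 = r q" "a1 \<cdot> p = a2 \<cdot> q"
  shows "a1 = a2" "b1 = b2"
proof -
  note ab1 = Lmin_memD[OF assms(1)] and ab2 = Lmin_memD[OF assms(2)]
  have "d a1 = d a2"
    using Lmin_source_degree(2)[OF assms(1,3,4)] Lmin_source_degree(2)[OF assms(2,3,4)]
    by (simp add: fun_eq_iff)
  then show "a1 = a2"
    using factorization_unique(1)[OF ab1(1) assms(5) ab2(1) assms(6-9)] by simp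
  then have "\<xi> \<cdot> b1 = \<xi> \<cdot> b2"
    using ab1(5) ab2(5) by simp
  then show "b1 = b2"
    using cancel_left[OF assms(4) ab1(2) ab2(2) ab1(4) ab2(4)] by simp
qed

lemma Lmin_comp_eq:
  assumes "(a, b) \<in> \<Lambda>min m \<xi>" "m \<in> Mor" "\<xi> \<in> Mor" "p \<in> Mor" "s a = r p"
  shows "m \<cdot> a \<cdot> p = \<xi> \<cdot> b \<cdot> p"
proof -
  note ab = Lmin_memD[OF assms(1)]
  have "s b = r p"
    using Lmin_source_degree(1)[OF assms(1-3)] assms(5) by simp
  then show ?thesis
    using comp_assoc[OF assms(2) ab(1) assms(4) ab(3) assms(5)] comp_assoc[OF assms(3) ab(2) assms(4) ab(4)]
      ab(5) by simp
qed

abbreviation S\<^sub>\<Lambda> :: "('a \<times> 'a) set set" where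
  "S\<^sub>\<Lambda> \<equiv> S_Lambda Mor r s cmp d"

abbreviation S_times :: "('a \<times> 'a) set \<Rightarrow> ('a \<times> 'a) set \<Rightarrow> ('a \<times> 'a) set" (infixl "\<odot>" 65) where
  "F \<odot> G \<equiv> S_mult Mor r s cmp d F G"

lemma S_Lambda_common_extension_fst:
  assumes "F \<in> S\<^sub>\<Lambda>" "(l1, m1) \<in> F" "(l2, m2) \<in> F"
    and "x \<in> Mor" "y \<in> Mor" "s l1 = r x" "s l2 = r y" "l1 \<cdot> x = l2 \<cdot> y"
  shows "l1 = l2" "m1 = m2" "x = y"
proof -
  have "(l1, m1) = (l2, m2)"
  proof (rule ccontr)
    assume "(l1, m1) \<noteq> (l2, m2)"
    then have "\<Lambda>min l1 l2 = {}"
      using S_Lambda_disjoint(1)[OF assms(1-3)] by simp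
    moreover obtain \<alpha> \<beta> e where "(\<alpha>, \<beta>) \<in> \<Lambda>min l1 l2"
      using Lmin_factor_common_extension[OF S_Lambda_memD(1)[OF assms(1,2)]
          S_Lambda_memD(1)[OF assms(1,3)] assms(4-8)] .
    ultimately show False
      by simp
  qed
  then show "l1 = l2" "m1 = m2"
    by simp_all
  then show "x = y"
    using cancel_left[OF S_Lambda_memD(1)[OF assms(1,2)] assms(4,5)] assms(6-8) by simp
qed

lemma S_Lambda_common_extension_snd:
  assumes "F \<in> S\<^sub>\<Lambda>" "(l1, m1) \<in> F" "(l2, m2) \<in> F"
    and "x \<in> Mor" "y \<in> Mor" "s m1 = r x" "s m2 = r y" "m1 \<cdot> x = m2 \<cdot> y"
  shows "l1 = l2" "m1 = m2" "x = y"
  using S_Lambda_common_extension_fst[OF S_star_in_S_Lambda[OF assms(1)], of m1 l1 m2 l2 x y] assms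
  by simp_all

lemma S_Lambda_extension_fst:
  assumes "F \<in> S\<^sub>\<Lambda>" "(l, m) \<in> F" "(l', m') \<in> F" "x \<in> Mor" "s l' = r x" "l = l' \<cdot> x"
  shows "l' = l" "m' = m" "x = s l"
proof -
  note lm = S_Lambda_memD[OF assms(1,2)]
  have "l \<cdot> s l = l' \<cdot> x"
    using lm(1) assms(6) by simp
  with S_Lambda_common_extension_fst[OF assms(1-3) s_in_Mor[OF lm(1)] assms(4) _ assms(5)] lm(1)
  show "l' = l" "m' = m" "x = s l"
    by simp_all
qed

lemma S_Lambda_extension_snd:
  assumes "F \<in> S\<^sub>\<Lambda>" "(l, m) \<in> F" "(l', m') \<in> F" "x \<in> Mor" "s m' = r x" "m = m' \<cdot> x"
  shows "l' = l" "m' = m" "x = s m"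
  using S_Lambda_extension_fst[OF S_star_in_S_Lambda[OF assms(1)], of m l m' l' x] assms by simp_all

lemma S_multI: "(l, m) \<in> F \<Longrightarrow> (\<xi>, \<eta>) \<in> G \<Longrightarrow> (a, b) \<in> \<Lambda>min m \<xi> \<Longrightarrow> (l \<cdot> a, \<eta> \<cdot> b) \<in> F \<odot> G"
  unfolding mem_S_mult by blast

lemma S_multE:
  assumes "F \<subseteq> fib_s Mor s" "G \<subseteq> fib_s Mor s" "(x, y) \<in> F \<odot> G"
  obtains l m \<xi> \<eta> a b where "(l, m) \<in> F" "(\<xi>, \<eta>) \<in> G" "(a, b) \<in> \<Lambda>min m \<xi>"
    "x = l \<cdot> a" "y = \<eta> \<cdot> b"
    "l \<in> Mor" "m \<in> Mor" "\<xi> \<in> Mor" "\<eta> \<in> Mor" "a \<in> Mor" "b \<in> Mor"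
    "s l = r a" "s m = r a" "s \<xi> = r b" "s \<eta> = r b" "s a = s b"
proof -
  obtain l m \<xi> \<eta> a b where *: "(l, m) \<in> F" "(\<xi>, \<eta>) \<in> G" "(a, b) \<in> \<Lambda>min m \<xi>"
    "x = l \<cdot> a" "y = \<eta> \<cdot> b"
    using assms(3) unfolding mem_S_mult by blast
  note lm = fib_sD[OF assms(1) *(1)] and \<xi>\<eta> = fib_sD[OF assms(2) *(2)]
  note ab = Lmin_memD[OF *(3)]
  show thesis
    by (rule that[OF * lm(1,2) \<xi>\<eta>(1,2) ab(1,2)])
      (use lm(3) \<xi>\<eta>(3) ab(3,4) Lmin_source_degree(1)[OF *(3) lm(2) \<xi>\<eta>(1)] in simp_all)
qed

lemma S_mult_subset_fib_s:
  assumes "F \<subseteq> fib_s Mor s" "G \<subseteq> fib_s Mor s"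
  shows "F \<odot> G \<subseteq> fib_s Mor s"
proof (rule subsetI, clarify)
  fix x y
  assume "(x, y) \<in> F \<odot> G"
  then show "(x, y) \<in> fib_s Mor s"
    by (rule S_multE[OF assms]) (simp add: fib_s_def)
qed

lemma S_mult_common_extension_fst:
  assumes F: "F \<in> S\<^sub>\<Lambda>" and G: "G \<in> S\<^sub>\<Lambda>" and "(x1, y1) \<in> F \<odot> G" "(x2, y2) \<in> F \<odot> G"
    and "p \<in> Mor" "q \<in> Mor" "s x1 = r p" "s x2 = r q" "x1 \<cdot> p = x2 \<cdot> q"
  shows "(x1, y1) = (x2, y2)"
proof -
  obtain l1 m1 \<xi>1 \<eta>1 a1 b1 where 1: "(l1, m1) \<in> F" "(\<xi>1, \<eta>1) \<in> G" "(a1, b1) \<in> \<Lambda>min m1 \<xi>1"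
    "x1 = l1 \<cdot> a1" "y1 = \<eta>1 \<cdot> b1" "l1 \<in> Mor" "m1 \<in> Mor" "\<xi>1 \<in> Mor" "\<eta>1 \<in> Mor" "a1 \<in> Mor" "b1 \<in> Mor"
    "s l1 = r a1" "s m1 = r a1" "s \<xi>1 = r b1" "s \<eta>1 = r b1" "s a1 = s b1"
    by (rule S_multE[OF S_Lambda_subset_fib_s[OF F] S_Lambda_subset_fib_s[OF G] assms(3)])
  obtain l2 m2 \<xi>2 \<eta>2 a2 b2 where 2: "(l2, m2) \<in> F" "(\<xi>2, \<eta>2) \<in> G" "(a2, b2) \<in> \<Lambda>min m2 \<xi>2"
    "x2 = l2 \<cdot> a2" "y2 = \<eta>2 \<cdot> b2" "l2 \<in> Mor" "m2 \<in> Mor" "\<xi>2 \<in> Mor" "\<eta>2 \<in> Mor" "a2 \<in> Mor" "b2 \<in> Mor"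
    "s l2 = r a2" "s m2 = r a2" "s \<xi>2 = r b2" "s \<eta>2 = r b2" "s a2 = s b2"
    by (rule S_multE[OF S_Lambda_subset_fib_s[OF F] S_Lambda_subset_fib_s[OF G] assms(4)])
  have p: "s a1 = r p" "s b1 = r p" and q: "s a2 = r q" "s b2 = r q"
    using assms(7,8) 1 2 by simp_all
  have "a1 \<cdot> p \<in> Mor" "a2 \<cdot> q \<in> Mor" "s l1 = r (a1 \<cdot> p)" "s l2 = r (a2 \<cdot> q)"
    using assms(5,6) 1 2 p q by simp_all
  moreover have "l1 \<cdot> a1 \<cdot> p = l2 \<cdot> a2 \<cdot> q"
    using assms(5,6,9) 1 2 p q by (simp add: comp_assoc)
  ultimately have lm: "l1 = l2" "m1 = m2" "a1 \<cdot> p = a2 \<cdot> q"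
    by (rule S_Lambda_common_extension_fst[OF F 1(1) 2(1)])+
  have "b1 \<cdot> p \<in> Mor" "b2 \<cdot> q \<in> Mor" "s \<xi>1 = r (b1 \<cdot> p)" "s \<xi>2 = r (b2 \<cdot> q)"
    using assms(5,6) 1 2 p q by simp_all
  moreover have "\<xi>1 \<cdot> b1 \<cdot> p = \<xi>2 \<cdot> b2 \<cdot> q"
    using Lmin_comp_eq[OF 1(3,7,8) assms(5) p(1)] Lmin_comp_eq[OF 2(3,7,8) assms(6) q(1)] lm by simp
  ultimately have "\<xi>1 = \<xi>2" "\<eta>1 = \<eta>2" "b1 \<cdot> p = b2 \<cdot> q"
    by (rule S_Lambda_common_extension_fst[OF G 1(2) 2(2)])+
  moreover have "a1 = a2" "b1 = b2"
    using Lmin_eq_of_common_extension[OF 1(3) _ 1(7,8) assms(5,6) p(1) q(1) lm(3)] 2(3) lm(2) \<open>\<xi>1 = \<xi>2\<close>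
    by simp_all
  ultimately show ?thesis
    using 1(4,5) 2(4,5) lm(1) by simp
qed

lemma S_mult_disjoint_fst:
  assumes "F \<in> S\<^sub>\<Lambda>" "G \<in> S\<^sub>\<Lambda>" "(x1, y1) \<in> F \<odot> G" "(x2, y2) \<in> F \<odot> G" "(x1, y1) \<noteq> (x2, y2)"
  shows "\<Lambda>min x1 x2 = {}"
proof -
  have False if "(p, q) \<in> \<Lambda>min x1 x2" for p q
    using S_mult_common_extension_fst[OF assms(1-4) Lmin_memD[OF that]] assms(5) by simp
  then show ?thesis
    by auto
qed

lemma S_mult_closed:
  assumes "finitely_aligned Mor r s cmp d" "F \<in> S\<^sub>\<Lambda>" "G \<in> S\<^sub>\<Lambda>"
  shows "F \<odot> G \<in> S\<^sub>\<Lambda>"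
proof (rule S_LambdaI)
  have "finite (\<Lambda>min m \<xi>)" if "(l, m) \<in> F" "(\<xi>, \<eta>) \<in> G" for l m \<xi> \<eta>
    using assms(1) S_Lambda_memD(2)[OF assms(2) that(1)] S_Lambda_memD(1)[OF assms(3) that(2)]
    unfolding finitely_aligned_def by blast
  moreover have "finite F" "finite G"
    using assms(2,3) unfolding S_Lambda_def by simp_all
  ultimately show "finite (F \<odot> G)"
    unfolding S_mult_eq_UN_image by auto
  show "F \<odot> G \<subseteq> fib_s Mor s"
    using S_mult_subset_fib_s[OF S_Lambda_subset_fib_s[OF assms(2)] S_Lambda_subset_fib_s[OF assms(3)]] .
  fix x1 y1 x2 y2
  assume xy: "(x1, y1) \<in> F \<odot> G" "(x2, y2) \<in> F \<odot> G" "(x1, y1) \<noteq> (x2, y2)"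
  then have yx: "(y1, x1) \<in> S_star G \<odot> S_star F" "(y2, x2) \<in> S_star G \<odot> S_star F"
    "(y1, x1) \<noteq> (y2, x2)"
    by (auto simp flip: S_star_S_mult)
  show "\<Lambda>min x1 x2 = {} \<and> \<Lambda>min y1 y2 = {}"
    using S_mult_disjoint_fst[OF assms(2,3) xy]
      S_mult_disjoint_fst[OF S_star_in_S_Lambda[OF assms(3)] S_star_in_S_Lambda[OF assms(2)] yx]
    by simp
qed

(* b has the least degree for which xi b can extend m and eta b can extend zeta. *)
definition triple_product :: "('a \<times> 'a) set \<Rightarrow> ('a \<times> 'a) set \<Rightarrow> ('a \<times> 'a) set \<Rightarrow> ('a \<times> 'a) set" where
  "triple_product F G H = {(l \<cdot> a, \<theta> \<cdot> c) | l m \<xi> \<eta> \<zeta> \<theta> a b c.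
     (l, m) \<in> F \<and> (\<xi>, \<eta>) \<in> G \<and> (\<zeta>, \<theta>) \<in> H \<and> a \<in> Mor \<and> b \<in> Mor \<and> c \<in> Mor \<and>
     s m = r a \<and> s \<xi> = r b \<and> s \<zeta> = r c \<and> m \<cdot> a = \<xi> \<cdot> b \<and> \<eta> \<cdot> b = \<zeta> \<cdot> c \<and>
     d b = (\<lambda>i. max (d m i - d \<xi> i) (d \<zeta> i - d \<eta> i))}"

lemma triple_productI:
  assumes "(l, m) \<in> F" "(\<xi>, \<eta>) \<in> G" "(\<zeta>, \<theta>) \<in> H" "a \<in> Mor" "b \<in> Mor" "c \<in> Mor"
    "s m = r a" "s \<xi> = r b" "s \<zeta> = r c" "m \<cdot> a = \<xi> \<cdot> b" "\<eta> \<cdot> b = \<zeta> \<cdot> c"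
    "d b = (\<lambda>i. max (d m i - d \<xi> i) (d \<zeta> i - d \<eta> i))"
  shows "(l \<cdot> a, \<theta> \<cdot> c) \<in> triple_product F G H"
  unfolding triple_product_def using assms by blast

lemma triple_productE:
  assumes "(x, y) \<in> triple_product F G H"
  obtains l m \<xi> \<eta> \<zeta> \<theta> a b c where "(l, m) \<in> F" "(\<xi>, \<eta>) \<in> G" "(\<zeta>, \<theta>) \<in> H"
    "a \<in> Mor" "b \<in> Mor" "c \<in> Mor" "s m = r a" "s \<xi> = r b" "s \<zeta> = r c"
    "m \<cdot> a = \<xi> \<cdot> b" "\<eta> \<cdot> b = \<zeta> \<cdot> c" "d b = (\<lambda>i. max (d m i - d \<xi> i) (d \<zeta> i - d \<eta> i))"
    "x = l \<cdot> a" "y = \<theta> \<cdot> c"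
  using assms unfolding triple_product_def by blast

lemma S_star_triple_product_subset:
  assumes "G \<subseteq> fib_s Mor s"
  shows "S_star (triple_product F G H) \<subseteq> triple_product (S_star H) (S_star G) (S_star F)"
proof (rule subsetI)
  fix z
  assume "z \<in> S_star (triple_product F G H)"
  then obtain x y where z: "z = (y, x)" and "(x, y) \<in> triple_product F G H"
    by (cases z) simp
  from this(2) obtain l m \<xi> \<eta> \<zeta> \<theta> a b c where t: "(l, m) \<in> F" "(\<xi>, \<eta>) \<in> G" "(\<zeta>, \<theta>) \<in> H"
    "a \<in> Mor" "b \<in> Mor" "c \<in> Mor" "s m = r a" "s \<xi> = r b" "s \<zeta> = r c"
    "m \<cdot> a = \<xi> \<cdot> b" "\<eta> \<cdot> b = \<zeta> \<cdot> c" "d b = (\<lambda>i. max (d m i - d \<xi> i) (d \<zeta> i - d \<eta> i))"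
    "x = l \<cdot> a" "y = \<theta> \<cdot> c"
    by (rule triple_productE)
  moreover have "s \<eta> = r b"
    using fib_sD(3)[OF assms t(2)] t(8) by simp
  ultimately show "z \<in> triple_product (S_star H) (S_star G) (S_star F)"
    using triple_productI[of \<theta> \<zeta> "S_star H" \<eta> \<xi> "S_star G" m l "S_star F" c b a] z
    by (simp add: max.commute)
qed

lemma S_star_triple_product:
  assumes "G \<subseteq> fib_s Mor s"
  shows "S_star (triple_product F G H) = triple_product (S_star H) (S_star G) (S_star F)"
proof (rule subset_antisym)
  show "S_star (triple_product F G H) \<subseteq> triple_product (S_star H) (S_star G) (S_star F)"
    using S_star_triple_product_subset[OF assms] .
  have "S_star G \<subseteq> fib_s Mor s"
    using assms unfolding fib_s_def by auto
  then have "S_star (triple_product (S_star H) (S_star G) (S_star F)) \<subseteq> triple_product F G H"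
    using S_star_triple_product_subset[of "S_star G" "S_star H" "S_star F"] by simp
  then show "triple_product (S_star H) (S_star G) (S_star F) \<subseteq> S_star (triple_product F G H)"
    by (auto simp: subset_iff)
qed

lemma Lmin_comp_Lmin_degree:
  assumes "(\<alpha>, \<beta>) \<in> \<Lambda>min m \<xi>" "(\<gamma>, \<delta>) \<in> \<Lambda>min (\<eta> \<cdot> \<beta>) \<zeta>"
    and "m \<in> Mor" "\<xi> \<in> Mor" "\<eta> \<in> Mor" "\<zeta> \<in> Mor" "s \<eta> = r \<beta>"
  shows "d \<beta> i + d \<gamma> i = max (d m i - d \<xi> i) (d \<zeta> i - d \<eta> i)"
proof -
  have "\<beta> \<in> Mor"
    using Lmin_memD(2)[OF assms(1)] .
  then have "d \<gamma> i = d \<zeta> i - (d \<eta> i + d \<beta> i)"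
    using Lmin_source_degree(2)[OF assms(2) _ assms(6)] assms(5,7) by simp
  moreover have "d \<beta> i = d m i - d \<xi> i"
    using Lmin_source_degree(3)[OF assms(1,3,4)] .
  ultimately show ?thesis
    by simp
qed

lemma S_mult_S_mult_subset_triple_product:
  assumes F: "F \<subseteq> fib_s Mor s" and G: "G \<subseteq> fib_s Mor s" and H: "H \<subseteq> fib_s Mor s"
  shows "(F \<odot> G) \<odot> H \<subseteq> triple_product F G H"
proof (rule subsetI)
  fix z
  assume "z \<in> (F \<odot> G) \<odot> H"
  moreover obtain x y where z: "z = (x, y)"
    by (rule prod.exhaust)
  ultimately obtain x' y' \<zeta> \<theta> \<gamma> \<delta> where xy': "(x', y') \<in> F \<odot> G" "(\<zeta>, \<theta>) \<in> H"
    "(\<gamma>, \<delta>) \<in> \<Lambda>min y' \<zeta>" "x = x' \<cdot> \<gamma>" "y = \<theta> \<cdot> \<delta>"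
    "x' \<in> Mor" "y' \<in> Mor" "\<zeta> \<in> Mor" "\<theta> \<in> Mor" "\<gamma> \<in> Mor" "\<delta> \<in> Mor"
    "s x' = r \<gamma>" "s y' = r \<gamma>" "s \<zeta> = r \<delta>" "s \<theta> = r \<delta>" "s \<gamma> = s \<delta>"
    using S_multE[OF S_mult_subset_fib_s[OF F G] H] by blast
  obtain l m \<xi> \<eta> \<alpha> \<beta> where lm: "(l, m) \<in> F" "(\<xi>, \<eta>) \<in> G" "(\<alpha>, \<beta>) \<in> \<Lambda>min m \<xi>"
    "x' = l \<cdot> \<alpha>" "y' = \<eta> \<cdot> \<beta>" "l \<in> Mor" "m \<in> Mor" "\<xi> \<in> Mor" "\<eta> \<in> Mor" "\<alpha> \<in> Mor" "\<beta> \<in> Mor"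
    "s l = r \<alpha>" "s m = r \<alpha>" "s \<xi> = r \<beta>" "s \<eta> = r \<beta>" "s \<alpha> = s \<beta>"
    by (rule S_multE[OF F G xy'(1)])
  have "s \<alpha> = r \<gamma>" "s \<beta> = r \<gamma>"
    using xy'(13) lm(5,9,11,15,16) by simp_all
  moreover have "d (\<beta> \<cdot> \<gamma>) = (\<lambda>i. max (d m i - d \<xi> i) (d \<zeta> i - d \<eta> i))"
    using Lmin_comp_Lmin_degree[of \<alpha> \<beta> m \<xi> \<gamma> \<delta> \<eta> \<zeta>] d_comp[OF lm(11) xy'(10)] xy'(3,8) lm(3,5,7-9,15)
      \<open>s \<beta> = r \<gamma>\<close> by (simp add: fun_eq_iff)
  ultimately have "(l \<cdot> \<alpha> \<cdot> \<gamma>, \<theta> \<cdot> \<delta>) \<in> triple_product F G H"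
    using Lmin_comp_eq[OF lm(3,7,8) xy'(10)] comp_assoc[OF lm(9,11) xy'(10) lm(15)]
      Lmin_memD(5)[OF xy'(3)] xy' lm
    by (intro triple_productI[of l m F \<xi> \<eta> G \<zeta> \<theta> H]) simp_all
  moreover have "x = l \<cdot> \<alpha> \<cdot> \<gamma>"
    using comp_assoc[OF lm(6,10) xy'(10) lm(12)] \<open>s \<alpha> = r \<gamma>\<close> xy'(4) lm(4) by simp
  ultimately show "z \<in> triple_product F G H"
    using z xy'(5) by simp
qed

lemma triple_product_subset_S_mult_S_mult:
  assumes F: "F \<subseteq> fib_s Mor s" and G: "G \<subseteq> fib_s Mor s" and H: "H \<subseteq> fib_s Mor s"
  shows "triple_product F G H \<subseteq> (F \<odot> G) \<odot> H"
proof (rule subsetI)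
  fix z
  assume "z \<in> triple_product F G H"
  moreover obtain x y where z: "z = (x, y)"
    by (rule prod.exhaust)
  ultimately obtain l m \<xi> \<eta> \<zeta> \<theta> a b c where t: "(l, m) \<in> F" "(\<xi>, \<eta>) \<in> G" "(\<zeta>, \<theta>) \<in> H"
    "a \<in> Mor" "b \<in> Mor" "c \<in> Mor" "s m = r a" "s \<xi> = r b" "s \<zeta> = r c"
    "m \<cdot> a = \<xi> \<cdot> b" "\<eta> \<cdot> b = \<zeta> \<cdot> c" "d b = (\<lambda>i. max (d m i - d \<xi> i) (d \<zeta> i - d \<eta> i))"
    "x = l \<cdot> a" "y = \<theta> \<cdot> c"
    using triple_productE by blast
  note lm = fib_sD[OF F t(1)] and \<xi>\<eta> = fib_sD[OF G t(2)] and \<zeta>\<theta> = fib_sD[OF H t(3)]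
  obtain \<alpha> \<beta> e where e: "(\<alpha>, \<beta>) \<in> \<Lambda>min m \<xi>" "e \<in> Mor" "s \<alpha> = r e" "s \<beta> = r e"
    "a = \<alpha> \<cdot> e" "b = \<beta> \<cdot> e"
    by (rule Lmin_factor_common_extension[OF lm(2) \<xi>\<eta>(1) t(4,5,7,8,10)])
  note \<alpha>\<beta> = Lmin_memD[OF e(1)]
  have s\<eta>: "s \<eta> = r \<beta>"
    using \<xi>\<eta>(3) \<alpha>\<beta>(4) by simp
  have "(\<eta> \<cdot> \<beta>) \<cdot> e = \<zeta> \<cdot> c"
    using comp_assoc[OF \<xi>\<eta>(2) \<alpha>\<beta>(2) e(2) s\<eta> e(4)] t(11) e(6) by simp
  then obtain \<gamma> \<delta> e' where e': "(\<gamma>, \<delta>) \<in> \<Lambda>min (\<eta> \<cdot> \<beta>) \<zeta>" "e' \<in> Mor" "s \<gamma> = r e'" "s \<delta> = r e'"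
    "e = \<gamma> \<cdot> e'" "c = \<delta> \<cdot> e'"
    using Lmin_factor_common_extension[of "\<eta> \<cdot> \<beta>" \<zeta> e c] \<xi>\<eta>(2) \<alpha>\<beta>(2) s\<eta> \<zeta>\<theta>(1) e(2,4) t(6,9)
    by auto
  note \<gamma>\<delta> = Lmin_memD[OF e'(1)]
  have "d e' i = 0" for i
    using Lmin_comp_Lmin_degree[OF e(1) e'(1) lm(2) \<xi>\<eta>(1,2) \<zeta>\<theta>(1) s\<eta>, of i] fun_cong[OF t(12), of i]
      e(4,6) e'(2,3,5) \<alpha>\<beta>(2) \<gamma>\<delta>(1) by simp
  then have "e' = r e'"
    using degree_zero_imp_eq_r[OF e'(2)] by simp
  then have "e = \<gamma>" "c = \<delta>"
    using e'(3-6) comp_s[OF \<gamma>\<delta>(1)] comp_s[OF \<gamma>\<delta>(2)] by metis+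
  have "((l \<cdot> \<alpha>) \<cdot> \<gamma>, \<theta> \<cdot> \<delta>) \<in> (F \<odot> G) \<odot> H"
    by (intro S_multI[OF S_multI[OF t(1,2) e(1)] t(3)]) (use e' \<open>e = \<gamma>\<close> in simp)
  moreover have "x = (l \<cdot> \<alpha>) \<cdot> \<gamma>"
    using comp_assoc[OF lm(1) \<alpha>\<beta>(1) \<gamma>\<delta>(1)] t(13) e(3,5) \<alpha>\<beta>(3) lm(3) \<gamma>\<delta>(3) \<open>e = \<gamma>\<close> by simp
  ultimately show "z \<in> (F \<odot> G) \<odot> H"
    using z t(14) \<open>c = \<delta>\<close> by simp
qed

lemma S_mult_S_mult_eq_triple_product:
  assumes "F \<subseteq> fib_s Mor s" "G \<subseteq> fib_s Mor s" "H \<subseteq> fib_s Mor s"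
  shows "(F \<odot> G) \<odot> H = triple_product F G H"
  using S_mult_S_mult_subset_triple_product[OF assms] triple_product_subset_S_mult_S_mult[OF assms]
  by (rule subset_antisym)

lemma S_mult_assoc:
  assumes "F \<subseteq> fib_s Mor s" "G \<subseteq> fib_s Mor s" "H \<subseteq> fib_s Mor s"
  shows "(F \<odot> G) \<odot> H = F \<odot> (G \<odot> H)"
proof -
  have star: "S_star X \<subseteq> fib_s Mor s" if "X \<subseteq> fib_s Mor s" for X
    using that unfolding fib_s_def by auto
  have "F \<odot> (G \<odot> H) = S_star ((S_star H \<odot> S_star G) \<odot> S_star F)"
    by (simp add: S_star_S_mult)
  also have "\<dots> = triple_product F G H"
    using S_mult_S_mult_eq_triple_product[OF star star star] S_star_triple_product[OF star] assms by simp
  finally show ?thesis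
    using S_mult_S_mult_eq_triple_product[OF assms] by simp
qed

lemma triple_product_star_subset:
  assumes F: "F \<in> S\<^sub>\<Lambda>"
  shows "triple_product F (S_star F) F \<subseteq> F"
proof (rule subsetI)
  fix z
  assume "z \<in> triple_product F (S_star F) F"
  moreover obtain x y where z: "z = (x, y)"
    by (rule prod.exhaust)
  ultimately obtain l m \<xi> \<eta> \<zeta> \<theta> a b c where t: "(l, m) \<in> F" "(\<xi>, \<eta>) \<in> S_star F"
    "(\<zeta>, \<theta>) \<in> F" "a \<in> Mor" "b \<in> Mor" "c \<in> Mor" "s m = r a" "s \<xi> = r b" "s \<zeta> = r c"
    "m \<cdot> a = \<xi> \<cdot> b" "\<eta> \<cdot> b = \<zeta> \<cdot> c" "d b = (\<lambda>i. max (d m i - d \<xi> i) (d \<zeta> i - d \<eta> i))"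
    "x = l \<cdot> a" "y = \<theta> \<cdot> c"
    using triple_productE by blast
  have \<eta>\<xi>: "(\<eta>, \<xi>) \<in> F"
    using t(2) by simp
  note lm = S_Lambda_memD[OF F t(1)]
  have "l = \<eta>" "m = \<xi>" "a = b"
    by (rule S_Lambda_common_extension_snd[OF F t(1) \<eta>\<xi> t(4,5,7,8,10)])+
  moreover have "s \<eta> = r b"
    using S_Lambda_memD(3)[OF F \<eta>\<xi>] t(8) by simp
  ultimately have "\<eta> = \<zeta>" "\<xi> = \<theta>" "b = c"
    using S_Lambda_common_extension_fst[OF F \<eta>\<xi> t(3) t(5,6) _ t(9,11)] by simp_all
  have "b = r b"
    using degree_zero_imp_eq_r[OF t(5)] t(12) \<open>l = \<eta>\<close> \<open>m = \<xi>\<close> \<open>\<eta> = \<zeta>\<close> by simp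
  then have "a = s l" "c = s m"
    using t(7) lm(3) \<open>a = b\<close> \<open>b = c\<close> by simp_all
  then have "x = l" "y = m"
    using t(13,14) lm(1,2) \<open>m = \<xi>\<close> \<open>\<xi> = \<theta>\<close> by simp_all
  then show "z \<in> F"
    using z t(1) by simp
qed

lemma subset_triple_product_star:
  assumes F: "F \<subseteq> fib_s Mor s"
  shows "F \<subseteq> triple_product F (S_star F) F"
proof (rule subsetI)
  fix z
  assume "z \<in> F"
  moreover obtain l m where z: "z = (l, m)"
    by (rule prod.exhaust)
  ultimately have lm: "(l, m) \<in> F" "l \<in> Mor" "m \<in> Mor" "s l = s m"
    using fib_sD[OF F] by auto
  then have "(l \<cdot> s m, m \<cdot> s m) \<in> triple_product F (S_star F) F"
    by (intro triple_productI[of l m F m l "S_star F" l m F "s m" "s m" "s m"]) (simp_all add: fun_eq_iff)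
  moreover have "l \<cdot> s m = l" "m \<cdot> s m = m"
    using comp_s[OF lm(2)] comp_s[OF lm(3)] lm(4) by simp_all
  ultimately show "z \<in> triple_product F (S_star F) F"
    using z by simp
qed

lemma S_mult_star_mult:
  assumes "F \<in> S\<^sub>\<Lambda>"
  shows "(F \<odot> S_star F) \<odot> F = F"
proof -
  have fib: "F \<subseteq> fib_s Mor s" "S_star F \<subseteq> fib_s Mor s"
    using S_Lambda_subset_fib_s assms S_star_in_S_Lambda by blast+
  have "triple_product F (S_star F) F = F"
    using triple_product_star_subset[OF assms] subset_triple_product_star[OF fib(1)]
    by (rule subset_antisym)
  then show ?thesis
    using S_mult_S_mult_eq_triple_product[OF fib(1,2,1)] by simp
qed

lemma S_mult_inverse_factor:
  assumes F: "F \<in> S\<^sub>\<Lambda>" and G: "G \<subseteq> fib_s Mor s" and "(F \<odot> G) \<odot> F = F" and "(l, m) \<in> F"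
  obtains \<xi> \<eta> \<beta> where "(\<xi>, \<eta>) \<in> G" "\<beta> \<in> Mor" "s \<xi> = r \<beta>" "m = \<xi> \<cdot> \<beta>" "l = \<eta> \<cdot> \<beta>"
proof -
  have "(l, m) \<in> triple_product F G F"
    using assms(3,4) S_mult_S_mult_eq_triple_product[OF S_Lambda_subset_fib_s[OF F] G
        S_Lambda_subset_fib_s[OF F]] by simp
  then obtain p q \<xi> \<eta> l' m' a b c where t: "(p, q) \<in> F" "(\<xi>, \<eta>) \<in> G" "(l', m') \<in> F"
    "a \<in> Mor" "b \<in> Mor" "c \<in> Mor" "s q = r a" "s \<xi> = r b" "s l' = r c"
    "q \<cdot> a = \<xi> \<cdot> b" "\<eta> \<cdot> b = l' \<cdot> c" "l = p \<cdot> a" "m = m' \<cdot> c"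
    by (rule triple_productE)
  note lm = S_Lambda_memD[OF F assms(4)] and pq = S_Lambda_memD[OF F t(1)]
  have "p = l" "q = m" "a = s l"
    using S_Lambda_extension_fst[OF F assms(4) t(1,4)] pq(3) t(7,12) by simp_all
  then have "m = \<xi> \<cdot> b"
    using t(10) lm by simp
  have "l' = l" "m' = m" "c = s m"
    using S_Lambda_extension_snd[OF F assms(4) t(3,6)] S_Lambda_memD(3)[OF F t(3)] t(9,13) by simp_all
  then have "l = \<eta> \<cdot> b"
    using t(11) lm(1) lm(3)[symmetric] by simp
  then show thesis
    using that t(2,5,8) \<open>m = \<xi> \<cdot> b\<close> by blast
qed

lemma S_mult_inverse_swap_mem:
  assumes F: "F \<in> S\<^sub>\<Lambda>" and G: "G \<in> S\<^sub>\<Lambda>"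
    and FGF: "(F \<odot> G) \<odot> F = F" and GFG: "(G \<odot> F) \<odot> G = G" and "(l, m) \<in> F"
  shows "(m, l) \<in> G"
proof -
  obtain \<xi> \<eta> \<beta> where \<beta>: "(\<xi>, \<eta>) \<in> G" "\<beta> \<in> Mor" "s \<xi> = r \<beta>" "m = \<xi> \<cdot> \<beta>" "l = \<eta> \<cdot> \<beta>"
    by (rule S_mult_inverse_factor[OF F S_Lambda_subset_fib_s[OF G] FGF assms(5)])
  obtain l' m' \<beta>' where \<beta>': "(l', m') \<in> F" "\<beta>' \<in> Mor" "s l' = r \<beta>'" "\<eta> = l' \<cdot> \<beta>'" "\<xi> = m' \<cdot> \<beta>'"
    by (rule S_mult_inverse_factor[OF G S_Lambda_subset_fib_s[OF F] GFG \<beta>(1)])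
  note \<xi>\<eta> = S_Lambda_memD[OF G \<beta>(1)] and lm' = S_Lambda_memD[OF F \<beta>'(1)]
  have s\<beta>': "s \<beta>' = r \<beta>"
    using \<beta>(3) \<xi>\<eta>(3) \<beta>'(3,4) lm'(1) \<beta>'(2) by simp
  have "l = l' \<cdot> \<beta>' \<cdot> \<beta>"
    using \<beta>(5) \<beta>'(4) comp_assoc[OF lm'(1) \<beta>'(2) \<beta>(2) \<beta>'(3) s\<beta>'] by simp
  then have "\<beta>' \<cdot> \<beta> = s l"
    using S_Lambda_extension_fst(3)[OF F assms(5) \<beta>'(1)] \<beta>'(2,3) \<beta>(2) s\<beta>' by simp
  then have "d \<beta> i = 0" for i
    using d_comp[OF \<beta>'(2) \<beta>(2) s\<beta>', of i] S_Lambda_memD(1)[OF F assms(5)] by simp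
  then have "\<beta> = r \<beta>"
    using degree_zero_imp_eq_r[OF \<beta>(2)] by simp
  then have "m = \<xi>" "l = \<eta>"
    using \<beta>(3,4,5) \<xi>\<eta> by (metis comp_s)+
  then show ?thesis
    using \<beta>(1) by simp
qed

lemma S_mult_inverse_unique:
  assumes "F \<in> S\<^sub>\<Lambda>" "G \<in> S\<^sub>\<Lambda>" "(F \<odot> G) \<odot> F = F" "(G \<odot> F) \<odot> G = G"
  shows "G = S_star F"
proof (rule set_eqI)
  fix z :: "'a \<times> 'a"
  obtain x y where z: "z = (x, y)"
    by (rule prod.exhaust)
  show "z \<in> G \<longleftrightarrow> z \<in> S_star F"
    using S_mult_inverse_swap_mem[OF assms] S_mult_inverse_swap_mem[OF assms(2,1,4,3)] z by auto
qed

end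

theorem proposition4p4:
  fixes k :: nat and Mor Obj :: "'a set" and r s :: "'a \<Rightarrow> 'a"
    and cmp :: "'a \<Rightarrow> 'a \<Rightarrow> 'a" and d :: "'a \<Rightarrow> nat \<Rightarrow> nat"
  assumes "k_graph k Mor Obj r s cmp d"
    and "finitely_aligned Mor r s cmp d"
  defines "S \<equiv> S_Lambda Mor r s cmp d"
    and "mult \<equiv> S_mult Mor r s cmp d"
  shows "(\<forall>F\<in>S. \<forall>G\<in>S. mult F G \<in> S)
    \<and> (\<forall>F\<in>S. \<forall>G\<in>S. \<forall>H\<in>S. mult (mult F G) H = mult F (mult G H))
    \<and> (\<forall>F\<in>S. S_star F \<in> S
          \<and> mult (mult F (S_star F)) F = F
          \<and> mult (mult (S_star F) F) (S_star F) = S_star F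
          \<and> (\<forall>G\<in>S. mult (mult F G) F = F \<and> mult (mult G F) G = G \<longrightarrow> G = S_star F))"
proof -
  interpret kgraph k Mor Obj r s cmp d
    by (rule kgraph.intro) (fact assms(1))
  have closed: "\<forall>F\<in>S. \<forall>G\<in>S. mult F G \<in> S"
    unfolding S_def mult_def by (intro ballI S_mult_closed[OF assms(2)])
  have assoc: "\<forall>F\<in>S. \<forall>G\<in>S. \<forall>H\<in>S. mult (mult F G) H = mult F (mult G H)"
    unfolding S_def mult_def by (intro ballI S_mult_assoc S_Lambda_subset_fib_s)
  have inverse: "\<forall>F\<in>S. S_star F \<in> S \<and> mult (mult F (S_star F)) F = F
      \<and> mult (mult (S_star F) F) (S_star F) = S_star F
      \<and> (\<forall>G\<in>S. mult (mult F G) F = F \<and> mult (mult G F) G = G \<longrightarrow> G = S_star F)"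
    unfolding S_def mult_def
  proof (intro ballI conjI impI)
    fix F G
    assume "F \<in> S\<^sub>\<Lambda>"
    then show "S_star F \<in> S\<^sub>\<Lambda>" "(F \<odot> S_star F) \<odot> F = F"
      by (rule S_star_in_S_Lambda, rule S_mult_star_mult)
    show "(S_star F \<odot> F) \<odot> S_star F = S_star F"
      using S_mult_star_mult[OF S_star_in_S_Lambda[OF \<open>F \<in> S\<^sub>\<Lambda>\<close>]] by simp
    assume "G \<in> S\<^sub>\<Lambda>" "(F \<odot> G) \<odot> F = F \<and> (G \<odot> F) \<odot> G = G"
    then show "G = S_star F"
      using S_mult_inverse_unique[OF \<open>F \<in> S\<^sub>\<Lambda>\<close>] by simp
  qed
  show ?thesis
    using closed assoc inverse by (intro conjI)
qed

end
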